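(* Let $A\bowtie^{\theta} I$ be an amalgamated Banach algebra as in the context. Then $A\bowtie^{\theta} I$ is Arens regular if and only if all of the following hold: $A$ is Arens regular; $I$ is Arens regular; and for every $F\in\theta^{**}(A^{**})$ and every $G\in I^{**}$ one has $F\Box G=F\Diamond G$ and $G\Box F=G\Diamond F$ (products in $B^{**}$), i.e. $\theta(A)$ and $I$ act regularly on each other.
   Context: Let $A$ and $B$ be Banach algebras, $\theta:A\to B$ a continuous algebra homomorphism with $\|\theta\|\le 1$, and $I$ a closed two-sided ideal of $B$. The amalgamated Banach algebra $A\bowtie^{\theta} I$ is the Banach space $\{(a,i): a\in A,\ i\in I\}$ with norm $\|(a,i)\|=\|a\|+\|i\|$ and product $(a,i)\cdot(a',i')=(aa',\ \theta(a)i'+i\theta(a')+ii')$. Arens products: for a Banach algebra $C$, $a,b\in C$, $f\in C^*$, $F,G\in C^{**}$, define $\langle a\cdot f,b\rangle=\langle f,ba\rangle$, $\langle f\cdot a,b\rangle=\langle f,ab\rangle$, $\langle f\cdot F,a\rangle=\langle F,a\cdot f\rangle$, $\langle F\cdot f,a\rangle=\langle F,f\cdot a\rangle$, $\langle F\Box G,f\rangle=\langle F,G\cdot f\rangle$, $\langle F\Diamond G,f\rangle=\langle G,f\cdot F\rangle$. $C$ is Arens regular if $F\Box G=F\Diamond G$ for all $F,G\in C^{**}$. $I^{**}$ is identified with the weak$^*$-closure of $I$ in $B^{**}$ and $\theta^{**}:A^{**}\to B^{**}$ is the second adjoint of $\theta$. *)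

theory Defs
  imports "HOL-Analysis.Analysis"
begin

text \<open>A (real) normed algebra is described concretely by a carrier S (a linear
subspace of an ambient real vector space), a norm N and a multiplication M.
Functionals are extensional: they vanish outside their domain.\<close>

definition lin_on :: "'v::real_vector set \<Rightarrow> ('v \<Rightarrow> real) \<Rightarrow> bool" where
  "lin_on S f \<longleftrightarrow> (\<forall>x\<in>S. \<forall>y\<in>S. f (x + y) = f x + f y) \<and> (\<forall>c. \<forall>x\<in>S. f (c *\<^sub>R x) = c * f x)"

definition dual :: "'v::real_vector set \<Rightarrow> ('v \<Rightarrow> real) \<Rightarrow> ('v \<Rightarrow> real) set" where
  "dual S N = {f. lin_on S f \<and> (\<exists>K. \<forall>x\<in>S. \<bar>f x\<bar> \<le> K * N x) \<and> (\<forall>x. x \<notin> S \<longrightarrow> f x = 0)}"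

definition dual_norm :: "'v::real_vector set \<Rightarrow> ('v \<Rightarrow> real) \<Rightarrow> ('v \<Rightarrow> real) \<Rightarrow> real" where
  "dual_norm S N f = Sup ((\<lambda>x. \<bar>f x\<bar>) ` {x\<in>S. N x \<le> 1})"

definition bidual :: "'v::real_vector set \<Rightarrow> ('v \<Rightarrow> real) \<Rightarrow> (('v \<Rightarrow> real) \<Rightarrow> real) set" where
  "bidual S N = {F. (\<forall>f\<in>dual S N. \<forall>g\<in>dual S N. F (\<lambda>x. f x + g x) = F f + F g)
      \<and> (\<forall>c. \<forall>f\<in>dual S N. F (\<lambda>x. c * f x) = c * F f)
      \<and> (\<exists>K. \<forall>f\<in>dual S N. \<bar>F f\<bar> \<le> K * dual_norm S N f)
      \<and> (\<forall>f. f \<notin> dual S N \<longrightarrow> F f = 0)}"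

definition lmod :: "'v set \<Rightarrow> ('v \<Rightarrow> 'v \<Rightarrow> 'v) \<Rightarrow> 'v \<Rightarrow> ('v \<Rightarrow> real) \<Rightarrow> 'v \<Rightarrow> real" where
  "lmod S M a f = (\<lambda>b. if b \<in> S then f (M b a) else 0)"

definition rmod :: "'v set \<Rightarrow> ('v \<Rightarrow> 'v \<Rightarrow> 'v) \<Rightarrow> ('v \<Rightarrow> real) \<Rightarrow> 'v \<Rightarrow> 'v \<Rightarrow> real" where
  "rmod S M f a = (\<lambda>b. if b \<in> S then f (M a b) else 0)"

definition fF :: "'v set \<Rightarrow> ('v \<Rightarrow> 'v \<Rightarrow> 'v) \<Rightarrow> ('v \<Rightarrow> real) \<Rightarrow> (('v \<Rightarrow> real) \<Rightarrow> real) \<Rightarrow> 'v \<Rightarrow> real" where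
  "fF S M f F = (\<lambda>a. if a \<in> S then F (lmod S M a f) else 0)"

definition Ff :: "'v set \<Rightarrow> ('v \<Rightarrow> 'v \<Rightarrow> 'v) \<Rightarrow> (('v \<Rightarrow> real) \<Rightarrow> real) \<Rightarrow> ('v \<Rightarrow> real) \<Rightarrow> 'v \<Rightarrow> real" where
  "Ff S M F f = (\<lambda>a. if a \<in> S then F (rmod S M f a) else 0)"

definition arens_box :: "'v::real_vector set \<Rightarrow> ('v \<Rightarrow> real) \<Rightarrow> ('v \<Rightarrow> 'v \<Rightarrow> 'v)
    \<Rightarrow> (('v \<Rightarrow> real) \<Rightarrow> real) \<Rightarrow> (('v \<Rightarrow> real) \<Rightarrow> real) \<Rightarrow> ('v \<Rightarrow> real) \<Rightarrow> real" where
  "arens_box S N M F G = (\<lambda>f. if f \<in> dual S N then F (Ff S M G f) else 0)"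

definition arens_diamond :: "'v::real_vector set \<Rightarrow> ('v \<Rightarrow> real) \<Rightarrow> ('v \<Rightarrow> 'v \<Rightarrow> 'v)
    \<Rightarrow> (('v \<Rightarrow> real) \<Rightarrow> real) \<Rightarrow> (('v \<Rightarrow> real) \<Rightarrow> real) \<Rightarrow> ('v \<Rightarrow> real) \<Rightarrow> real" where
  "arens_diamond S N M F G = (\<lambda>f. if f \<in> dual S N then G (fF S M f F) else 0)"

definition arens_regular :: "'v::real_vector set \<Rightarrow> ('v \<Rightarrow> real) \<Rightarrow> ('v \<Rightarrow> 'v \<Rightarrow> 'v) \<Rightarrow> bool" where
  "arens_regular S N M \<longleftrightarrow>
     (\<forall>F\<in>bidual S N. \<forall>G\<in>bidual S N. arens_box S N M F G = arens_diamond S N M F G)"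

text \<open>Amalgamated algebra A \<bowtie>^\<theta> I, realised as the subspace UNIV \<times> I of 'a \<times> 'b\<close>
definition amalg_carrier :: "'b set \<Rightarrow> ('a \<times> 'b) set" where
  "amalg_carrier I = {(a, i). i \<in> I}"

definition amalg_norm :: "('a::real_normed_vector \<times> 'b::real_normed_vector) \<Rightarrow> real" where
  "amalg_norm p = norm (fst p) + norm (snd p)"

definition amalg_mult :: "('a::times \<Rightarrow> 'b::{times,plus}) \<Rightarrow> ('a \<times> 'b) \<Rightarrow> ('a \<times> 'b) \<Rightarrow> ('a \<times> 'b)" where
  "amalg_mult \<theta> p q = (fst p * fst q, \<theta> (fst p) * snd q + snd p * \<theta> (fst q) + snd p * snd q)"

definition second_adjoint :: "('a \<Rightarrow> 'b::real_normed_vector) \<Rightarrow> (('a \<Rightarrow> real) \<Rightarrow> real) \<Rightarrow> ('b \<Rightarrow> real) \<Rightarrow> real" where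
  "second_adjoint \<theta> F = (\<lambda>g. if g \<in> dual (UNIV::'b set) norm then F (\<lambda>a. g (\<theta> a)) else 0)"

text \<open>The canonical identification of I** with the weak*-closure of I in B**:
  the second adjoint of the inclusion I \<hookrightarrow> B.\<close>
definition incl_bidual :: "'b::real_normed_vector set \<Rightarrow> (('b \<Rightarrow> real) \<Rightarrow> real) \<Rightarrow> ('b \<Rightarrow> real) \<Rightarrow> real" where
  "incl_bidual I G = (\<lambda>g. if g \<in> dual (UNIV::'b set) norm then G (\<lambda>x. if x \<in> I then g x else 0) else 0)"

end

theory Submission
  imports Defs
begin

text \<open>As a normed space \<open>A \<bowtie>\<^sup>\<theta> I\<close> is the \<open>\<ell>\<^sup>1\<close>-sum of A and I, so every element of its
  bidual is a pair \<open>(F, G)\<close> with \<open>F \<in> A\<^sup>*\<^sup>*\<close> and \<open>G \<in> I\<^sup>*\<^sup>*\<close>.  Evaluating either Arens product of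
  \<open>(F, G)\<close> and \<open>(F', G')\<close> at a functional \<open>\<Phi>\<close> gives four terms: the product of F and F' in
  \<open>A\<^sup>*\<^sup>*\<close> at the A-part of \<open>\<Phi>\<close>, the product of G and G' in \<open>I\<^sup>*\<^sup>*\<close> at the I-part of \<open>\<Phi>\<close>, and the
  mixed products \<open>\<theta>\<^sup>*\<^sup>*F \<cdot> G'\<close> and \<open>G \<cdot> \<theta>\<^sup>*\<^sup>*F'\<close> in \<open>B\<^sup>*\<^sup>*\<close>, evaluated at a Hahn--Banach extension
  to B of the I-part of \<open>\<Phi>\<close>.  Both Arens products split in the same way, so regularity of the
  four pieces gives regularity of the amalgamation; conversely each piece is isolated by pairs
  with a zero component, tested against functionals living on a single summand.\<close>

section \<open>Hahn--Banach for sublinear functionals\<close>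

definition sublinear :: "('v::real_vector \<Rightarrow> real) \<Rightarrow> bool" where
  "sublinear p \<longleftrightarrow> (\<forall>x y. p (x + y) \<le> p x + p y) \<and> (\<forall>c x. 0 \<le> c \<longrightarrow> p (c *\<^sub>R x) = c * p x)"

lemma sublinear_scaled_norm: "0 \<le> K \<Longrightarrow> sublinear (\<lambda>x. K * norm x)"
  unfolding sublinear_def by (auto simp: norm_triangle_ineq mult_left_mono distrib_left[symmetric])

lemma sublinear_add: "sublinear p \<Longrightarrow> p (x + y) \<le> p x + p y"
  unfolding sublinear_def by blast

lemma sublinear_homogeneous: "sublinear p \<Longrightarrow> 0 \<le> c \<Longrightarrow> p (c *\<^sub>R x) = c * p x"
  unfolding sublinear_def by blast

text \<open>Partial linear functionals are handled through their graphs, so that Zorn's lemma can be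
  applied to plain set inclusion.\<close>

definition dominated_linear_graphs ::
    "('v::real_vector \<Rightarrow> real) \<Rightarrow> 'v set \<Rightarrow> ('v \<Rightarrow> real) \<Rightarrow> ('v \<times> real) set set" where
  "dominated_linear_graphs p I \<phi> = {M.
       (\<forall>x a b. (x, a) \<in> M \<longrightarrow> (x, b) \<in> M \<longrightarrow> a = b)
     \<and> (\<forall>x a y b. (x, a) \<in> M \<longrightarrow> (y, b) \<in> M \<longrightarrow> (x + y, a + b) \<in> M)
     \<and> (\<forall>c x a. (x, a) \<in> M \<longrightarrow> (c *\<^sub>R x, c * a) \<in> M)
     \<and> (\<forall>x a. (x, a) \<in> M \<longrightarrow> a \<le> p x)
     \<and> (\<forall>x\<in>I. (x, \<phi> x) \<in> M)}"

lemma dominated_linear_graphsD: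
  assumes "M \<in> dominated_linear_graphs p I \<phi>"
  shows "(x, a) \<in> M \<Longrightarrow> (x, b) \<in> M \<Longrightarrow> a = b"
    and "(x, a) \<in> M \<Longrightarrow> (y, b) \<in> M \<Longrightarrow> (x + y, a + b) \<in> M"
    and "(x, a) \<in> M \<Longrightarrow> (c *\<^sub>R x, c * a) \<in> M"
    and "(x, a) \<in> M \<Longrightarrow> a \<le> p x"
    and "x \<in> I \<Longrightarrow> (x, \<phi> x) \<in> M"
  using assms unfolding dominated_linear_graphs_def by blast+

lemma dominated_linear_graphs_chain_Union:
  assumes "C \<noteq> {}" and chain: "subset.chain (dominated_linear_graphs p I \<phi>) C"
  shows "\<Union>C \<in> dominated_linear_graphs p I \<phi>"
proof -
  have C: "C \<subseteq> dominated_linear_graphs p I \<phi>" using chain by (auto simp: subset_chain_def)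
  have common: "\<exists>M\<in>C. u \<in> M \<and> v \<in> M" if u: "u \<in> \<Union>C" and v: "v \<in> \<Union>C" for u v
  proof -
    obtain M1 M2 where "M1 \<in> C" "M2 \<in> C" "u \<in> M1" "v \<in> M2" using u v by blast
    moreover have "M1 \<subseteq> M2 \<or> M2 \<subseteq> M1" using chain \<open>M1 \<in> C\<close> \<open>M2 \<in> C\<close> by (auto simp: subset_chain_def)
    ultimately show ?thesis by blast
  qed
  show ?thesis
    unfolding dominated_linear_graphs_def
  proof (intro CollectI conjI allI impI ballI)
    fix x a b assume "(x, a) \<in> \<Union>C" "(x, b) \<in> \<Union>C"
    then show "a = b" using common C by (meson dominated_linear_graphsD(1) subsetD)
  next
    fix x a y b assume "(x, a) \<in> \<Union>C" "(y, b) \<in> \<Union>C"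
    then show "(x + y, a + b) \<in> \<Union>C" using common C by (meson UnionI dominated_linear_graphsD(2) subsetD)
  next
    fix c x a assume "(x, a) \<in> \<Union>C"
    then show "(c *\<^sub>R x, c * a) \<in> \<Union>C" using C by (meson UnionE UnionI dominated_linear_graphsD(3) subsetD)
  next
    fix x a assume "(x, a) \<in> \<Union>C"
    then show "a \<le> p x" using C by (meson UnionE dominated_linear_graphsD(4) subsetD)
  next
    fix x assume "x \<in> I"
    then show "(x, \<phi> x) \<in> \<Union>C" using C \<open>C \<noteq> {}\<close> by (meson UnionI dominated_linear_graphsD(5) ex_in_conv subsetD)
  qed
qed

lemma graph_in_dominated_linear_graphs:
  assumes I: "subspace I" and \<phi>: "lin_on I \<phi>" "\<And>x. x \<in> I \<Longrightarrow> \<phi> x \<le> p x"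
  shows "{(x, \<phi> x) | x. x \<in> I} \<in> dominated_linear_graphs p I \<phi>"
  unfolding dominated_linear_graphs_def
proof (rule CollectI, intro conjI allI impI ballI)
  fix x a y b assume "(x, a) \<in> {(x, \<phi> x) | x. x \<in> I}" "(y, b) \<in> {(x, \<phi> x) | x. x \<in> I}"
  then show "(x + y, a + b) \<in> {(x, \<phi> x) | x. x \<in> I}"
    using \<phi>(1) subspace_add[OF I] unfolding lin_on_def by auto
next
  fix c x a assume "(x, a) \<in> {(x, \<phi> x) | x. x \<in> I}"
  then show "(c *\<^sub>R x, c * a) \<in> {(x, \<phi> x) | x. x \<in> I}"
    using \<phi>(1) subspace_mul[OF I] unfolding lin_on_def by auto
qed (use \<phi>(2) in auto)

text \<open>The one-dimensional step of the Hahn--Banach argument: a value c at a new direction y is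
  admissible if it lies between every \<open>a - p (x - y)\<close> and every \<open>p (z + y) - b\<close> for
  \<open>(x, a), (z, b) \<in> M\<close>; subadditivity of p makes every such lower bound smaller than every upper
  bound.\<close>

lemma dominated_extension_value:
  assumes p: "sublinear p" and M: "M \<in> dominated_linear_graphs p I \<phi>" "M \<noteq> {}"
  obtains c where "\<And>x a. (x, a) \<in> M \<Longrightarrow> a - p (x - y) \<le> c"
    and "\<And>z b. (z, b) \<in> M \<Longrightarrow> c \<le> p (z + y) - b"
proof -
  have sep: "a - p (x - y) \<le> p (z + y) - b" if "(x, a) \<in> M" "(z, b) \<in> M" for x a z b
  proof -
    have "a + b \<le> p ((x - y) + (z + y))"
      using dominated_linear_graphsD(4)[OF M(1) dominated_linear_graphsD(2)[OF M(1) that]] by (simp add: algebra_simps)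
    also have "\<dots> \<le> p (x - y) + p (z + y)" using p by (rule sublinear_add)
    finally show ?thesis by simp
  qed
  define T where "T = {a - p (x - y) | x a. (x, a) \<in> M}"
  obtain z b where zb: "(z, b) \<in> M" using M(2) by auto
  have "T \<noteq> {}" using zb by (auto simp: T_def)
  have "bdd_above T" using sep[OF _ zb] unfolding T_def bdd_above_def by blast
  show ?thesis
  proof (rule that)
    fix x a assume "(x, a) \<in> M"
    then show "a - p (x - y) \<le> Sup T"
      using \<open>bdd_above T\<close> by (intro cSup_upper) (auto simp: T_def)
  next
    fix z b assume "(z, b) \<in> M"
    then show "Sup T \<le> p (z + y) - b"
      using \<open>T \<noteq> {}\<close> sep unfolding T_def by (intro cSup_least) auto
  qed
qed

lemma dominated_extension_bound:
  assumes p: "sublinear p" and M: "M \<in> dominated_linear_graphs p I \<phi>"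
    and lower: "\<And>x a. (x, a) \<in> M \<Longrightarrow> a - p (x - y) \<le> c"
    and upper: "\<And>z b. (z, b) \<in> M \<Longrightarrow> c \<le> p (z + y) - b"
    and xa: "(x, a) \<in> M"
  shows "a + t * c \<le> p (x + t *\<^sub>R y)"
proof (cases t "0 :: real" rule: linorder_cases)
  case less
  have "inverse (-t) * a - p (inverse (-t) *\<^sub>R x - y) \<le> c"
    using lower[OF dominated_linear_graphsD(3)[OF M xa]] .
  then have "(-t) * (inverse (-t) * a - p (inverse (-t) *\<^sub>R x - y)) \<le> (-t) * c"
    using less by (intro mult_left_mono) auto
  moreover have "(-t) *\<^sub>R (inverse (-t) *\<^sub>R x - y) = x + t *\<^sub>R y"
    using less by (simp add: algebra_simps)
  moreover have "p ((-t) *\<^sub>R (inverse (-t) *\<^sub>R x - y)) = (-t) * p (inverse (-t) *\<^sub>R x - y)"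
    using p less by (simp only: sublinear_homogeneous)
  ultimately show ?thesis using less by (simp add: algebra_simps)
next
  case equal
  then show ?thesis using dominated_linear_graphsD(4)[OF M xa] by simp
next
  case greater
  have "c \<le> p (inverse t *\<^sub>R x + y) - inverse t * a"
    using upper[OF dominated_linear_graphsD(3)[OF M xa]] .
  then have "t * c \<le> t * (p (inverse t *\<^sub>R x + y) - inverse t * a)"
    using greater by (intro mult_left_mono) auto
  moreover have "t *\<^sub>R (inverse t *\<^sub>R x + y) = x + t *\<^sub>R y"
    using greater by (simp add: algebra_simps)
  moreover have "p (t *\<^sub>R (inverse t *\<^sub>R x + y)) = t * p (inverse t *\<^sub>R x + y)"
    using p greater by (simp only: sublinear_homogeneous less_imp_le)
  ultimately show ?thesis using greater by (simp add: algebra_simps)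
qed

definition graph_extension :: "('v::real_vector \<times> real) set \<Rightarrow> 'v \<Rightarrow> real \<Rightarrow> ('v \<times> real) set" where
  "graph_extension M y c = {(x + t *\<^sub>R y, a + t * c) | x a t. (x, a) \<in> M}"

lemma graph_extension_coefficient_unique:
  assumes M: "M \<in> dominated_linear_graphs p I \<phi>" and y: "\<nexists>a. (y, a) \<in> M"
    and xa: "(x, a) \<in> M" "(x', a') \<in> M" and eq: "x + t *\<^sub>R y = x' + t' *\<^sub>R y"
  shows "t = t'"
proof (rule ccontr)
  assume "t \<noteq> t'"
  have "(x + (-1) *\<^sub>R x', a + (-1) * a') \<in> M"
    using dominated_linear_graphsD(2,3)[OF M] xa by blast
  then have "(inverse (t' - t) *\<^sub>R (x - x'), inverse (t' - t) * (a - a')) \<in> M"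
    using dominated_linear_graphsD(3)[OF M] by fastforce
  moreover have "x - x' = (t' - t) *\<^sub>R y" using eq by (simp add: algebra_simps)
  then have "inverse (t' - t) *\<^sub>R (x - x') = y" using \<open>t \<noteq> t'\<close> by simp
  ultimately show False using y by auto
qed

lemma graph_extension_dominated:
  assumes p: "sublinear p" and M: "M \<in> dominated_linear_graphs p I \<phi>" and y: "\<nexists>a. (y, a) \<in> M"
    and lower: "\<And>x a. (x, a) \<in> M \<Longrightarrow> a - p (x - y) \<le> c"
    and upper: "\<And>z b. (z, b) \<in> M \<Longrightarrow> c \<le> p (z + y) - b"
  shows "graph_extension M y c \<in> dominated_linear_graphs p I \<phi>"
  unfolding dominated_linear_graphs_def
proof (intro CollectI conjI allI impI ballI)
  fix v u w assume "(v, u) \<in> graph_extension M y c" "(v, w) \<in> graph_extension M y c"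
  then obtain x a t x' a' t' where xa: "(x, a) \<in> M" "(x', a') \<in> M" and "v = x + t *\<^sub>R y"
    "u = a + t * c" "v = x' + t' *\<^sub>R y" "w = a' + t' * c" unfolding graph_extension_def by blast
  moreover have "t = t'" using graph_extension_coefficient_unique[OF M y xa] calculation by metis
  ultimately show "u = w" using dominated_linear_graphsD(1)[OF M] by simp
next
  fix v u v' u' assume "(v, u) \<in> graph_extension M y c" "(v', u') \<in> graph_extension M y c"
  then obtain x a t x' a' t' where "(x, a) \<in> M" "(x', a') \<in> M" "v = x + t *\<^sub>R y" "u = a + t * c"
    "v' = x' + t' *\<^sub>R y" "u' = a' + t' * c" unfolding graph_extension_def by blast
  moreover have "(x + x', a + a') \<in> M" using dominated_linear_graphsD(2)[OF M] calculation by blast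
  moreover have "(v + v', u + u') = ((x + x') + (t + t') *\<^sub>R y, (a + a') + (t + t') * c)"
    using calculation by (simp add: algebra_simps)
  ultimately show "(v + v', u + u') \<in> graph_extension M y c" unfolding graph_extension_def by blast
next
  fix r v u assume "(v, u) \<in> graph_extension M y c"
  then obtain x a t where "(x, a) \<in> M" "v = x + t *\<^sub>R y" "u = a + t * c"
    unfolding graph_extension_def by blast
  moreover have "(r *\<^sub>R x, r * a) \<in> M" using dominated_linear_graphsD(3)[OF M] calculation by blast
  moreover have "(r *\<^sub>R v, r * u) = (r *\<^sub>R x + (r * t) *\<^sub>R y, r * a + (r * t) * c)"
    using calculation by (simp add: algebra_simps)
  ultimately show "(r *\<^sub>R v, r * u) \<in> graph_extension M y c" unfolding graph_extension_def by blast
next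
  fix v u assume "(v, u) \<in> graph_extension M y c"
  then show "u \<le> p v"
    using dominated_extension_bound[OF p M lower upper] unfolding graph_extension_def by blast
next
  fix x assume "x \<in> I"
  then have "(x + 0 *\<^sub>R y, \<phi> x + 0 * c) \<in> graph_extension M y c"
    using dominated_linear_graphsD(5)[OF M] unfolding graph_extension_def by blast
  then show "(x, \<phi> x) \<in> graph_extension M y c" by simp
qed

lemma graph_extension_psubset:
  assumes M: "M \<in> dominated_linear_graphs p I \<phi>" "M \<noteq> {}" and y: "\<nexists>a. (y, a) \<in> M"
  shows "M \<subset> graph_extension M y c"
proof -
  have "M \<subseteq> graph_extension M y c"
  proof
    fix v assume "v \<in> M"
    moreover obtain x a where "v = (x, a)" by fastforce
    ultimately have "v = (x + 0 *\<^sub>R y, a + 0 * c)" "(x, a) \<in> M" by simp_all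
    then show "v \<in> graph_extension M y c" unfolding graph_extension_def by blast
  qed
  moreover obtain x a where "(x, a) \<in> M" using M(2) by auto
  then have "(0 + 1 *\<^sub>R y, 0 + 1 * c) \<in> graph_extension M y c"
    using dominated_linear_graphsD(3)[OF M(1), of x a 0] unfolding graph_extension_def by fastforce
  ultimately show ?thesis using y by auto
qed

theorem hahn_banach_sublinear:
  assumes p: "sublinear p" and I: "subspace I" and \<phi>: "lin_on I \<phi>" "\<And>x. x \<in> I \<Longrightarrow> \<phi> x \<le> p x"
  obtains g where "lin_on UNIV g" "\<And>x. g x \<le> p x" "\<And>x. x \<in> I \<Longrightarrow> g x = \<phi> x"
proof -
  let ?\<G> = "dominated_linear_graphs p I \<phi>"
  have "?\<G> \<noteq> {}" using graph_in_dominated_linear_graphs[OF I \<phi>] by blast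
  then obtain M where M: "M \<in> ?\<G>" and max: "\<And>M'. M' \<in> ?\<G> \<Longrightarrow> M \<subseteq> M' \<Longrightarrow> M' = M"
    using subset_Zorn_nonempty[of ?\<G>] dominated_linear_graphs_chain_Union by meson
  have "M \<noteq> {}" using dominated_linear_graphsD(5)[OF M subspace_0[OF I]] by blast
  have total: "\<exists>a. (y, a) \<in> M" for y
  proof (rule ccontr)
    assume y: "\<nexists>a. (y, a) \<in> M"
    obtain c where "\<And>x a. (x, a) \<in> M \<Longrightarrow> a - p (x - y) \<le> c" "\<And>z b. (z, b) \<in> M \<Longrightarrow> c \<le> p (z + y) - b"
      using dominated_extension_value[OF p M \<open>M \<noteq> {}\<close>] by blast
    then have "graph_extension M y c \<in> ?\<G>" by (rule graph_extension_dominated[OF p M y])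
    then show False using max graph_extension_psubset[OF M \<open>M \<noteq> {}\<close> y] by blast
  qed
  define g where "g x = (THE a. (x, a) \<in> M)" for x
  have graph: "(x, g x) \<in> M" for x
    using total[of x] dominated_linear_graphsD(1)[OF M] unfolding g_def by (metis theI)
  have eq: "g x = a" if "(x, a) \<in> M" for x a
    using dominated_linear_graphsD(1)[OF M graph that] .
  show ?thesis
  proof
    show "lin_on UNIV g"
      using graph dominated_linear_graphsD(2,3)[OF M] eq unfolding lin_on_def by blast
  qed (use graph eq dominated_linear_graphsD(4,5)[OF M] in blast)+
qed

lemma dual_extension:
  fixes I :: "'v::real_normed_vector set"
  assumes I: "subspace I" and f: "f \<in> dual I norm"
  obtains g where "g \<in> dual UNIV norm" "\<And>x. x \<in> I \<Longrightarrow> g x = f x"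
proof -
  obtain K where K: "\<And>x. x \<in> I \<Longrightarrow> \<bar>f x\<bar> \<le> K * norm x" using f unfolding dual_def by blast
  define K' where "K' = max K 0"
  have mono: "K * norm x \<le> K' * norm x" for x unfolding K'_def by (intro mult_right_mono) auto
  have bound: "\<bar>f x\<bar> \<le> K' * norm x" if "x \<in> I" for x using order_trans[OF K[OF that] mono] .
  obtain g where g: "lin_on UNIV g" "\<And>x. g x \<le> K' * norm x" "\<And>x. x \<in> I \<Longrightarrow> g x = f x"
  proof (rule hahn_banach_sublinear[OF sublinear_scaled_norm I])
    show "0 \<le> K'" unfolding K'_def by simp
    show "lin_on I f" using f unfolding dual_def by blast
  qed (use bound abs_le_D1 in blast)+
  have "\<bar>g x\<bar> \<le> K' * norm x" for x
  proof -
    have "g (- x) = - g x" using g(1) unfolding lin_on_def by (metis scaleR_minus1_left mult_minus1 UNIV_I)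
    then show ?thesis using g(2)[of x] g(2)[of "- x"] by simp
  qed
  then have "g \<in> dual UNIV norm" using g(1) unfolding dual_def by blast
  then show ?thesis using that g(3) by blast
qed

section \<open>Duals, biduals and Arens products of normed subspaces\<close>

locale normed_subspace =
  fixes S :: "'v::real_vector set" and N :: "'v \<Rightarrow> real"
  assumes subspace: "subspace S"
    and nonneg: "\<And>x. 0 \<le> N x"
    and zero: "N 0 = 0"
begin

lemma zero_mem: "0 \<in> S" using subspace by (rule subspace_0)
lemma add_mem: "x \<in> S \<Longrightarrow> y \<in> S \<Longrightarrow> x + y \<in> S" using subspace by (rule subspace_add)
lemma scale_mem: "x \<in> S \<Longrightarrow> c *\<^sub>R x \<in> S" using subspace by (rule subspace_mul)

lemma dualI:
  assumes "\<And>x y. x \<in> S \<Longrightarrow> y \<in> S \<Longrightarrow> f (x + y) = f x + f y"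
    and "\<And>c x. x \<in> S \<Longrightarrow> f (c *\<^sub>R x) = c * f x"
    and "\<And>x. x \<in> S \<Longrightarrow> \<bar>f x\<bar> \<le> K * N x"
    and "\<And>x. x \<notin> S \<Longrightarrow> f x = 0"
  shows "f \<in> dual S N"
  using assms unfolding dual_def lin_on_def by blast

lemma dual_add: "f \<in> dual S N \<Longrightarrow> x \<in> S \<Longrightarrow> y \<in> S \<Longrightarrow> f (x + y) = f x + f y"
  unfolding dual_def lin_on_def by blast

lemma dual_scale: "f \<in> dual S N \<Longrightarrow> x \<in> S \<Longrightarrow> f (c *\<^sub>R x) = c * f x"
  unfolding dual_def lin_on_def by blast

lemma dual_out: "f \<in> dual S N \<Longrightarrow> x \<notin> S \<Longrightarrow> f x = 0"
  unfolding dual_def by blast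

lemma dual_zero_point: "f \<in> dual S N \<Longrightarrow> f 0 = 0"
  using dual_scale[of f 0 0] zero_mem by simp

lemma dual_bound:
  assumes "f \<in> dual S N"
  obtains K where "0 \<le> K" "\<And>x. x \<in> S \<Longrightarrow> \<bar>f x\<bar> \<le> K * N x"
proof -
  obtain K where K: "\<And>x. x \<in> S \<Longrightarrow> \<bar>f x\<bar> \<le> K * N x" using assms unfolding dual_def by blast
  have mono: "K * N x \<le> max K 0 * N x" for x using nonneg by (intro mult_right_mono) auto
  show ?thesis by (rule that[of "max K 0"]) (auto intro: order_trans[OF K mono])
qed

lemma abs_le_dual_norm:
  assumes f: "f \<in> dual S N" and x: "x \<in> S" "N x \<le> 1"
  shows "\<bar>f x\<bar> \<le> dual_norm S N f"
proof -
  obtain K where K: "0 \<le> K" "\<And>x. x \<in> S \<Longrightarrow> \<bar>f x\<bar> \<le> K * N x" using dual_bound[OF f] by blast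
  have "\<bar>f y\<bar> \<le> K" if "y \<in> S" "N y \<le> 1" for y
    using order_trans[OF K(2)[OF that(1)] mult_left_mono[OF that(2) K(1)]] by simp
  then have "bdd_above ((\<lambda>x. \<bar>f x\<bar>) ` {x\<in>S. N x \<le> 1})" by (auto simp: bdd_above_def)
  then show ?thesis unfolding dual_norm_def using x by (intro cSup_upper) auto
qed

lemma dual_norm_nonneg: "f \<in> dual S N \<Longrightarrow> 0 \<le> dual_norm S N f"
  using abs_le_dual_norm[of f 0] zero_mem zero by force

lemma dual_norm_le:
  assumes "\<And>x. x \<in> S \<Longrightarrow> N x \<le> 1 \<Longrightarrow> \<bar>f x\<bar> \<le> C"
  shows "dual_norm S N f \<le> C"
  unfolding dual_norm_def using assms zero_mem zero by (intro cSup_least) auto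

lemma dual_plus:
  assumes f: "f \<in> dual S N" and g: "g \<in> dual S N"
  shows "(\<lambda>x. f x + g x) \<in> dual S N"
proof -
  obtain K L where K: "\<And>x. x \<in> S \<Longrightarrow> \<bar>f x\<bar> \<le> K * N x" and L: "\<And>x. x \<in> S \<Longrightarrow> \<bar>g x\<bar> \<le> L * N x"
    using dual_bound[OF f] dual_bound[OF g] by metis
  show ?thesis
  proof (rule dualI[where K = "K + L"])
    fix x assume "x \<in> S"
    then show "\<bar>f x + g x\<bar> \<le> (K + L) * N x"
      using K L abs_triangle_ineq[of "f x" "g x"] by (simp add: distrib_right) (smt (verit))
  qed (simp_all add: f g dual_add dual_scale dual_out algebra_simps)
qed

lemma dual_cmult:
  assumes f: "f \<in> dual S N"
  shows "(\<lambda>x. c * f x) \<in> dual S N"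
proof -
  obtain K where K: "0 \<le> K" "\<And>x. x \<in> S \<Longrightarrow> \<bar>f x\<bar> \<le> K * N x" using dual_bound[OF f] by blast
  show ?thesis
  proof (rule dualI[where K = "\<bar>c\<bar> * K"])
    fix x assume "x \<in> S"
    then show "\<bar>c * f x\<bar> \<le> \<bar>c\<bar> * K * N x" using K by (simp add: abs_mult mult.assoc mult_left_mono)
  qed (simp_all add: f dual_add dual_scale dual_out algebra_simps)
qed

lemma dual_zero: "(\<lambda>x. 0) \<in> dual S N"
  by (rule dualI[where K = 0]) auto

lemma bidualI:
  assumes "\<And>f g. f \<in> dual S N \<Longrightarrow> g \<in> dual S N \<Longrightarrow> F (\<lambda>x. f x + g x) = F f + F g"
    and "\<And>c f. f \<in> dual S N \<Longrightarrow> F (\<lambda>x. c * f x) = c * F f"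
    and "\<And>f. f \<in> dual S N \<Longrightarrow> \<bar>F f\<bar> \<le> K * dual_norm S N f"
    and "\<And>f. f \<notin> dual S N \<Longrightarrow> F f = 0"
  shows "F \<in> bidual S N"
  using assms unfolding bidual_def by blast

lemma bidual_add: "F \<in> bidual S N \<Longrightarrow> f \<in> dual S N \<Longrightarrow> g \<in> dual S N \<Longrightarrow> F (\<lambda>x. f x + g x) = F f + F g"
  unfolding bidual_def by blast

lemma bidual_scale: "F \<in> bidual S N \<Longrightarrow> f \<in> dual S N \<Longrightarrow> F (\<lambda>x. c * f x) = c * F f"
  unfolding bidual_def by blast

lemma bidual_out: "F \<in> bidual S N \<Longrightarrow> f \<notin> dual S N \<Longrightarrow> F f = 0"
  unfolding bidual_def by blast

lemma bidual_zero_point: "F \<in> bidual S N \<Longrightarrow> F (\<lambda>x. 0) = 0"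
  using bidual_scale[of F "\<lambda>x. 0" 0] dual_zero by simp

lemma bidual_bound:
  assumes "F \<in> bidual S N"
  obtains K where "0 \<le> K" "\<And>f. f \<in> dual S N \<Longrightarrow> \<bar>F f\<bar> \<le> K * dual_norm S N f"
proof -
  obtain K where K: "\<And>f. f \<in> dual S N \<Longrightarrow> \<bar>F f\<bar> \<le> K * dual_norm S N f"
    using assms unfolding bidual_def by blast
  have mono: "K * dual_norm S N f \<le> max K 0 * dual_norm S N f" if "f \<in> dual S N" for f
    using dual_norm_nonneg[OF that] by (intro mult_right_mono) auto
  show ?thesis by (rule that[of "max K 0"]) (auto intro: order_trans[OF K mono])
qed

lemma bidual_zero: "(\<lambda>f. 0) \<in> bidual S N"
  by (rule bidualI[where K = 0]) auto

lemma bidual_plus: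
  assumes F: "F \<in> bidual S N" and G: "G \<in> bidual S N"
  shows "(\<lambda>f. F f + G f) \<in> bidual S N"
proof -
  obtain K L where K: "\<And>f. f \<in> dual S N \<Longrightarrow> \<bar>F f\<bar> \<le> K * dual_norm S N f"
    and L: "\<And>f. f \<in> dual S N \<Longrightarrow> \<bar>G f\<bar> \<le> L * dual_norm S N f"
    using bidual_bound[OF F] bidual_bound[OF G] by metis
  show ?thesis
  proof (rule bidualI[where K = "K + L"])
    fix f assume "f \<in> dual S N"
    then show "\<bar>F f + G f\<bar> \<le> (K + L) * dual_norm S N f"
      using K L abs_triangle_ineq[of "F f" "G f"] by (simp add: distrib_right) (smt (verit))
  qed (simp_all add: F G bidual_add bidual_scale bidual_out algebra_simps)
qed

end

text \<open>Outside S the transpose is set to 0, matching the convention that functionals vanish off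
  their domain.\<close>

definition dual_map :: "'u set \<Rightarrow> ('u \<Rightarrow> 'v) \<Rightarrow> ('v \<Rightarrow> real) \<Rightarrow> 'u \<Rightarrow> real" where
  "dual_map S T f = (\<lambda>x. if x \<in> S then f (T x) else 0)"

definition bidual_map :: "'v::real_vector set \<Rightarrow> ('v \<Rightarrow> real) \<Rightarrow> 'u set \<Rightarrow> ('u \<Rightarrow> 'v)
    \<Rightarrow> (('u \<Rightarrow> real) \<Rightarrow> real) \<Rightarrow> ('v \<Rightarrow> real) \<Rightarrow> real" where
  "bidual_map S' N' S T X = (\<lambda>f. if f \<in> dual S' N' then X (dual_map S T f) else 0)"

definition bounded_linear_on :: "'u::real_vector set \<Rightarrow> ('u \<Rightarrow> real) \<Rightarrow> 'v::real_vector set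
    \<Rightarrow> ('v \<Rightarrow> real) \<Rightarrow> real \<Rightarrow> ('u \<Rightarrow> 'v) \<Rightarrow> bool" where
  "bounded_linear_on S N S' N' C T \<longleftrightarrow> 0 \<le> C \<and> (\<forall>x\<in>S. T x \<in> S' \<and> N' (T x) \<le> C * N x)
     \<and> (\<forall>x\<in>S. \<forall>y\<in>S. T (x + y) = T x + T y) \<and> (\<forall>c. \<forall>x\<in>S. T (c *\<^sub>R x) = c *\<^sub>R T x)"

lemma bounded_linear_onI:
  assumes "0 \<le> C" "\<And>x. x \<in> S \<Longrightarrow> T x \<in> S'" "\<And>x. x \<in> S \<Longrightarrow> N' (T x) \<le> C * N x"
    and "\<And>x y. x \<in> S \<Longrightarrow> y \<in> S \<Longrightarrow> T (x + y) = T x + T y"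
    and "\<And>c x. x \<in> S \<Longrightarrow> T (c *\<^sub>R x) = c *\<^sub>R T x"
  shows "bounded_linear_on S N S' N' C T"
  using assms unfolding bounded_linear_on_def by blast

lemma bounded_linear_onD:
  assumes "bounded_linear_on S N S' N' C T"
  shows "0 \<le> C" "x \<in> S \<Longrightarrow> T x \<in> S'" "x \<in> S \<Longrightarrow> N' (T x) \<le> C * N x"
    and "x \<in> S \<Longrightarrow> y \<in> S \<Longrightarrow> T (x + y) = T x + T y"
    and "x \<in> S \<Longrightarrow> T (c *\<^sub>R x) = c *\<^sub>R T x"
  using assms unfolding bounded_linear_on_def by blast+

lemma dual_map_plus: "dual_map S T (\<lambda>x. f x + g x) = (\<lambda>x. dual_map S T f x + dual_map S T g x)"
  by (auto simp: dual_map_def)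

lemma dual_map_cmult: "dual_map S T (\<lambda>x. c * f x) = (\<lambda>x. c * dual_map S T f x)"
  by (auto simp: dual_map_def)

lemma dual_map_dual:
  assumes S: "normed_subspace S N" and S': "normed_subspace S' N'"
    and T: "bounded_linear_on S N S' N' C T" and f: "f \<in> dual S' N'"
  shows "dual_map S T f \<in> dual S N"
proof -
  obtain K where K: "0 \<le> K" "\<And>y. y \<in> S' \<Longrightarrow> \<bar>f y\<bar> \<le> K * N' y"
    using normed_subspace.dual_bound[OF S' f] by blast
  show ?thesis
  proof (rule normed_subspace.dualI[OF S, where K = "K * C"])
    fix x assume x: "x \<in> S"
    have "\<bar>f (T x)\<bar> \<le> K * N' (T x)" using K(2) bounded_linear_onD(2)[OF T x] .
    also have "\<dots> \<le> K * (C * N x)" using bounded_linear_onD(3)[OF T x] K(1) by (rule mult_left_mono)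
    finally show "\<bar>dual_map S T f x\<bar> \<le> K * C * N x" using x by (simp add: dual_map_def mult.assoc)
  qed (use bounded_linear_onD[OF T] normed_subspace.add_mem[OF S] normed_subspace.scale_mem[OF S]
         normed_subspace.dual_add[OF S' f] normed_subspace.dual_scale[OF S' f] in \<open>simp_all add: dual_map_def\<close>)
qed

lemma dual_norm_dual_map_le_bound:
  assumes S: "normed_subspace S N" and T: "bounded_linear_on S N S' N' C T"
    and K: "0 \<le> K" "\<And>y. y \<in> S' \<Longrightarrow> \<bar>f y\<bar> \<le> K * N' y"
  shows "dual_norm S N (dual_map S T f) \<le> K * C"
proof (rule normed_subspace.dual_norm_le[OF S])
  fix x assume x: "x \<in> S" "N x \<le> 1"
  have "\<bar>f (T x)\<bar> \<le> K * N' (T x)" using K(2) bounded_linear_onD(2)[OF T x(1)] .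
  also have "\<dots> \<le> K * (C * N x)" using bounded_linear_onD(3)[OF T x(1)] K(1) by (rule mult_left_mono)
  also have "\<dots> \<le> K * C"
    using mult_left_mono[OF x(2) bounded_linear_onD(1)[OF T]] K(1) by (simp add: mult_left_mono)
  finally show "\<bar>dual_map S T f x\<bar> \<le> K * C" using x by (simp add: dual_map_def)
qed

lemma dual_norm_dual_map_le:
  assumes S: "normed_subspace S N" and S': "normed_subspace S' N'"
    and T: "bounded_linear_on S N S' N' 1 T" and f: "f \<in> dual S' N'"
  shows "dual_norm S N (dual_map S T f) \<le> dual_norm S' N' f"
proof (rule normed_subspace.dual_norm_le[OF S])
  fix x assume x: "x \<in> S" "N x \<le> 1"
  then have "N' (T x) \<le> 1" using bounded_linear_onD(3)[OF T x(1)] by simp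
  then show "\<bar>dual_map S T f x\<bar> \<le> dual_norm S' N' f"
    using normed_subspace.abs_le_dual_norm[OF S' f bounded_linear_onD(2)[OF T x(1)]] x
    by (simp add: dual_map_def)
qed

lemma bidual_map_bidual:
  assumes S: "normed_subspace S N" and S': "normed_subspace S' N'"
    and T: "bounded_linear_on S N S' N' 1 T" and X: "X \<in> bidual S N"
  shows "bidual_map S' N' S T X \<in> bidual S' N'"
proof -
  obtain K where K: "0 \<le> K" "\<And>f. f \<in> dual S N \<Longrightarrow> \<bar>X f\<bar> \<le> K * dual_norm S N f"
    using normed_subspace.bidual_bound[OF S X] by blast
  note dual_map = dual_map_dual[OF S S' T]
  show ?thesis
  proof (rule normed_subspace.bidualI[OF S', where K = K])
    fix f g assume "f \<in> dual S' N'" "g \<in> dual S' N'"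
    then show "bidual_map S' N' S T X (\<lambda>x. f x + g x) = bidual_map S' N' S T X f + bidual_map S' N' S T X g"
      by (simp add: bidual_map_def dual_map_plus normed_subspace.dual_plus[OF S']
            normed_subspace.bidual_add[OF S X] dual_map)
  next
    fix c f assume "f \<in> dual S' N'"
    then show "bidual_map S' N' S T X (\<lambda>x. c * f x) = c * bidual_map S' N' S T X f"
      by (simp add: bidual_map_def dual_map_cmult normed_subspace.dual_cmult[OF S']
            normed_subspace.bidual_scale[OF S X] dual_map)
  next
    fix f assume f: "f \<in> dual S' N'"
    have "\<bar>X (dual_map S T f)\<bar> \<le> K * dual_norm S N (dual_map S T f)" using K(2)[OF dual_map[OF f]] .
    also have "\<dots> \<le> K * dual_norm S' N' f" using dual_norm_dual_map_le[OF S S' T f] K(1) by (rule mult_left_mono)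
    finally show "\<bar>bidual_map S' N' S T X f\<bar> \<le> K * dual_norm S' N' f" using f by (simp add: bidual_map_def)
  qed (simp add: bidual_map_def)
qed

locale normed_algebra_on = normed_subspace +
  fixes M :: "'v::real_vector \<Rightarrow> 'v \<Rightarrow> 'v"
  assumes mult_mem: "\<And>x y. x \<in> S \<Longrightarrow> y \<in> S \<Longrightarrow> M x y \<in> S"
    and add_mult: "\<And>x y z. x \<in> S \<Longrightarrow> y \<in> S \<Longrightarrow> z \<in> S \<Longrightarrow> M (x + y) z = M x z + M y z"
    and mult_add: "\<And>x y z. x \<in> S \<Longrightarrow> y \<in> S \<Longrightarrow> z \<in> S \<Longrightarrow> M x (y + z) = M x y + M x z"
    and scale_mult: "\<And>c x y. x \<in> S \<Longrightarrow> y \<in> S \<Longrightarrow> M (c *\<^sub>R x) y = c *\<^sub>R M x y"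
    and mult_scale: "\<And>c x y. x \<in> S \<Longrightarrow> y \<in> S \<Longrightarrow> M x (c *\<^sub>R y) = c *\<^sub>R M x y"
    and submult: "\<And>x y. x \<in> S \<Longrightarrow> y \<in> S \<Longrightarrow> N (M x y) \<le> N x * N y"
begin

lemma opposite: "normed_algebra_on S N (\<lambda>x y. M y x)"
proof
  show "N (M y x) \<le> N x * N y" if "x \<in> S" "y \<in> S" for x y
    using submult[OF that(2,1)] by (simp add: mult.commute)
qed (simp_all add: normed_subspace_axioms mult_mem add_mult mult_add scale_mult mult_scale)

lemma bounded_linear_on_mult_left: "a \<in> S \<Longrightarrow> bounded_linear_on S N S N (N a) (M a)"
  by (intro bounded_linear_onI) (simp_all add: nonneg mult_mem mult_add mult_scale submult)

lemma rmod_eq_dual_map: "rmod S M f a = dual_map S (M a) f"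
  by (simp add: rmod_def dual_map_def)

lemma lmod_eq_opposite_rmod: "lmod S M a f = rmod S (\<lambda>x y. M y x) f a"
  by (simp add: lmod_def rmod_def)

lemma fF_eq_opposite_Ff: "fF S M f F = Ff S (\<lambda>x y. M y x) F f"
  unfolding fF_def Ff_def lmod_eq_opposite_rmod ..

lemma rmod_dual: "f \<in> dual S N \<Longrightarrow> a \<in> S \<Longrightarrow> rmod S M f a \<in> dual S N"
  unfolding rmod_eq_dual_map
  by (rule dual_map_dual[OF normed_subspace_axioms normed_subspace_axioms bounded_linear_on_mult_left])

lemma rmod_add: "f \<in> dual S N \<Longrightarrow> a \<in> S \<Longrightarrow> b \<in> S \<Longrightarrow>
    rmod S M f (a + b) = (\<lambda>x. rmod S M f a x + rmod S M f b x)"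
  by (auto simp: rmod_def add_mult dual_add mult_mem)

lemma rmod_scale: "f \<in> dual S N \<Longrightarrow> a \<in> S \<Longrightarrow> rmod S M f (c *\<^sub>R a) = (\<lambda>x. c * rmod S M f a x)"
  by (auto simp: rmod_def scale_mult dual_scale mult_mem)

lemma Ff_dual:
  assumes G: "G \<in> bidual S N" and f: "f \<in> dual S N"
  shows "Ff S M G f \<in> dual S N"
proof -
  obtain K where K: "0 \<le> K" "\<And>x. x \<in> S \<Longrightarrow> \<bar>f x\<bar> \<le> K * N x" using dual_bound[OF f] by blast
  obtain L where L: "0 \<le> L" "\<And>g. g \<in> dual S N \<Longrightarrow> \<bar>G g\<bar> \<le> L * dual_norm S N g"
    using bidual_bound[OF G] by blast
  show ?thesis
  proof (rule dualI[where K = "L * K"])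
    fix x y assume "x \<in> S" "y \<in> S"
    then show "Ff S M G f (x + y) = Ff S M G f x + Ff S M G f y"
      by (simp add: Ff_def add_mem rmod_add[OF f] bidual_add[OF G] rmod_dual[OF f])
  next
    fix c x assume "x \<in> S"
    then show "Ff S M G f (c *\<^sub>R x) = c * Ff S M G f x"
      by (simp add: Ff_def scale_mem rmod_scale[OF f] bidual_scale[OF G] rmod_dual[OF f])
  next
    fix x assume x: "x \<in> S"
    have "\<bar>G (rmod S M f x)\<bar> \<le> L * dual_norm S N (rmod S M f x)" using L(2) rmod_dual[OF f x] .
    also have "\<dots> \<le> L * (K * N x)" unfolding rmod_eq_dual_map
      using dual_norm_dual_map_le_bound[OF normed_subspace_axioms bounded_linear_on_mult_left[OF x] K] L(1)
      by (rule mult_left_mono)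
    finally show "\<bar>Ff S M G f x\<bar> \<le> L * K * N x" using x by (simp add: Ff_def mult.assoc)
  qed (simp add: Ff_def)
qed

lemma lmod_dual: "f \<in> dual S N \<Longrightarrow> a \<in> S \<Longrightarrow> lmod S M a f \<in> dual S N"
  unfolding lmod_eq_opposite_rmod by (rule normed_algebra_on.rmod_dual[OF opposite])

lemma fF_dual: "G \<in> bidual S N \<Longrightarrow> f \<in> dual S N \<Longrightarrow> fF S M f G \<in> dual S N"
  unfolding fF_eq_opposite_Ff by (rule normed_algebra_on.Ff_dual[OF opposite])

lemma arens_box_zero_left: "arens_box S N M (\<lambda>f. 0) G = (\<lambda>f. 0)"
  by (simp add: arens_box_def fun_eq_iff)

lemma arens_box_zero_right: "F \<in> bidual S N \<Longrightarrow> arens_box S N M F (\<lambda>f. 0) = (\<lambda>f. 0)"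
  by (simp add: arens_box_def Ff_def fun_eq_iff bidual_zero_point)

lemma arens_diamond_zero_left: "G \<in> bidual S N \<Longrightarrow> arens_diamond S N M (\<lambda>f. 0) G = (\<lambda>f. 0)"
  by (simp add: arens_diamond_def fF_def fun_eq_iff bidual_zero_point)

lemma arens_diamond_zero_right: "arens_diamond S N M F (\<lambda>f. 0) = (\<lambda>f. 0)"
  by (simp add: arens_diamond_def fun_eq_iff)

end

lemma arens_regularD:
  "arens_regular S N M \<Longrightarrow> F \<in> bidual S N \<Longrightarrow> G \<in> bidual S N
    \<Longrightarrow> arens_box S N M F G f = arens_diamond S N M F G f"
  unfolding arens_regular_def by metis

lemma arens_products_eqI:
  "(\<And>f. f \<in> dual S N \<Longrightarrow> arens_box S N M F G f = arens_diamond S N M F G f)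
    \<Longrightarrow> arens_box S N M F G = arens_diamond S N M F G"
  by (auto simp: arens_box_def arens_diamond_def fun_eq_iff)

lemma arens_regularI:
  "(\<And>F G f. F \<in> bidual S N \<Longrightarrow> G \<in> bidual S N \<Longrightarrow> f \<in> dual S N
      \<Longrightarrow> arens_box S N M F G f = arens_diamond S N M F G f) \<Longrightarrow> arens_regular S N M"
  unfolding arens_regular_def by (auto intro: arens_products_eqI)

section \<open>The amalgamated algebra\<close>

lemma normed_algebra_on_subalgebra:
  fixes I :: "'a::real_normed_algebra set"
  assumes "subspace I" "\<And>x y. x \<in> I \<Longrightarrow> y \<in> I \<Longrightarrow> x * y \<in> I"
  shows "normed_algebra_on I norm (*)"
  using assms by unfold_locales (auto simp: distrib_left distrib_right norm_mult_ineq)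

lemma amalg_carrier_iff [simp]: "p \<in> amalg_carrier I \<longleftrightarrow> snd p \<in> I"
  by (cases p) (simp add: amalg_carrier_def)

lemma amalg_mult_Pair [simp]: "amalg_mult \<theta> (a, i) (a', i') = (a * a', \<theta> a * i' + i * \<theta> a' + i * i')"
  by (simp add: amalg_mult_def)

lemma amalg_norm_Pair [simp]: "amalg_norm (a, i) = norm a + norm i"
  by (simp add: amalg_norm_def)

text \<open>Neither multiplicativity of \<open>\<theta>\<close> nor completeness or closedness enter: the Arens products
  and the identification of the biduals are purely linear-algebraic.\<close>

locale amalgamation =
  fixes \<theta> :: "'a::real_normed_algebra \<Rightarrow> 'b::real_normed_algebra" and I :: "'b set"
  assumes hom_linear: "bounded_linear \<theta>"
    and hom_contraction: "onorm \<theta> \<le> 1"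
    and ideal_subspace: "subspace I"
    and ideal_left: "\<And>b i. i \<in> I \<Longrightarrow> b * i \<in> I"
    and ideal_right: "\<And>b i. i \<in> I \<Longrightarrow> i * b \<in> I"
begin

lemma hom_norm_le: "norm (\<theta> x) \<le> norm x"
  using onorm[OF hom_linear, of x] mult_right_mono[OF hom_contraction norm_ge_zero[of x]] by simp

lemma hom_add: "\<theta> (x + y) = \<theta> x + \<theta> y" and hom_scale: "\<theta> (c *\<^sub>R x) = c *\<^sub>R \<theta> x"
  using hom_linear by (simp_all add: linear_simps)

lemma hom_zero [simp]: "\<theta> 0 = 0"
  using hom_linear by (simp add: linear_simps)

lemma zero_mem [simp]: "0 \<in> I"
  using ideal_subspace by (rule subspace_0)

sublocale A: normed_algebra_on "UNIV :: 'a set" norm "(*)"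
  by (rule normed_algebra_on_subalgebra) (simp_all add: subspace_UNIV)

sublocale B: normed_algebra_on "UNIV :: 'b set" norm "(*)"
  by (rule normed_algebra_on_subalgebra) (simp_all add: subspace_UNIV)

sublocale I: normed_algebra_on I norm "(*)"
  by (rule normed_algebra_on_subalgebra) (simp_all add: ideal_subspace ideal_left)

sublocale amalg: normed_algebra_on "amalg_carrier I :: ('a \<times> 'b) set" amalg_norm "amalg_mult \<theta>"
proof
  show "subspace (amalg_carrier I :: ('a \<times> 'b) set)"
    using ideal_subspace unfolding subspace_def by auto
next
  fix x y :: "'a \<times> 'b"
  obtain a i a' i' where xy: "x = (a, i)" "y = (a', i')" by fastforce
  have "norm (\<theta> a * i') \<le> norm a * norm i'"
    using order_trans[OF norm_mult_ineq mult_right_mono[OF hom_norm_le]] by simp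
  moreover have "norm (i * \<theta> a') \<le> norm i * norm a'"
    using order_trans[OF norm_mult_ineq mult_left_mono[OF hom_norm_le]] by simp
  moreover have "norm (i * i') \<le> norm i * norm i'" "norm (a * a') \<le> norm a * norm a'"
    by (rule norm_mult_ineq)+
  ultimately show "amalg_norm (amalg_mult \<theta> x y) \<le> amalg_norm x * amalg_norm y"
    unfolding xy by (simp add: algebra_simps) (smt (verit) norm_triangle_ineq)
qed (use ideal_subspace ideal_left ideal_right in \<open>auto simp: amalg_norm_def subspace_add hom_add hom_scale
       algebra_simps\<close>)

abbreviation "carrier_AI \<equiv> amalg_carrier I :: ('a \<times> 'b) set"
abbreviation "mult_AI \<equiv> amalg_mult \<theta>"

abbreviation "dual_A \<equiv> dual (UNIV :: 'a set) norm"
abbreviation "dual_B \<equiv> dual (UNIV :: 'b set) norm"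
abbreviation "dual_I \<equiv> dual I norm"
abbreviation "dual_AI \<equiv> dual carrier_AI amalg_norm"
abbreviation "bidual_A \<equiv> bidual (UNIV :: 'a set) norm"
abbreviation "bidual_B \<equiv> bidual (UNIV :: 'b set) norm"
abbreviation "bidual_I \<equiv> bidual I norm"
abbreviation "bidual_AI \<equiv> bidual carrier_AI amalg_norm"

abbreviation "dual_fst \<Phi> \<equiv> dual_map UNIV (\<lambda>a. (a, 0)) \<Phi>"
abbreviation "dual_snd \<Phi> \<equiv> dual_map I (\<lambda>i. (0, i)) \<Phi>"
abbreviation "dual_embed_A f \<equiv> dual_map carrier_AI fst f"
abbreviation "dual_embed_I h \<equiv> dual_map carrier_AI snd h"
abbreviation "bidual_fst X \<equiv> bidual_map UNIV norm carrier_AI fst X"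
abbreviation "bidual_snd X \<equiv> bidual_map I norm carrier_AI snd X"

definition bidual_pair :: "(('a \<Rightarrow> real) \<Rightarrow> real) \<Rightarrow> (('b \<Rightarrow> real) \<Rightarrow> real) \<Rightarrow> ('a \<times> 'b \<Rightarrow> real) \<Rightarrow> real" where
  "bidual_pair F G = (\<lambda>\<Phi>. if \<Phi> \<in> dual_AI then F (dual_fst \<Phi>) + G (dual_snd \<Phi>) else 0)"

lemma bounded_linear_on_inl: "bounded_linear_on UNIV norm carrier_AI amalg_norm 1 (\<lambda>a. (a, 0))"
  by (intro bounded_linear_onI) auto

lemma bounded_linear_on_inr: "bounded_linear_on I norm carrier_AI amalg_norm 1 (\<lambda>i. (0, i))"
  by (intro bounded_linear_onI) auto

lemma bounded_linear_on_fst: "bounded_linear_on carrier_AI amalg_norm UNIV norm 1 fst"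
  by (intro bounded_linear_onI) (auto simp: amalg_norm_def)

lemma bounded_linear_on_snd: "bounded_linear_on carrier_AI amalg_norm I norm 1 snd"
  by (intro bounded_linear_onI) (auto simp: amalg_norm_def)

lemma bounded_linear_on_hom: "bounded_linear_on UNIV norm UNIV norm 1 \<theta>"
  by (intro bounded_linear_onI) (simp_all add: hom_add hom_scale hom_norm_le)

lemma bounded_linear_on_inclusion: "bounded_linear_on I norm UNIV norm 1 (\<lambda>x. x)"
  by (intro bounded_linear_onI) auto

lemma second_adjoint_eq: "second_adjoint \<theta> F = bidual_map UNIV norm UNIV \<theta> F"
  by (simp add: second_adjoint_def bidual_map_def dual_map_def cong: if_cong)

lemma incl_bidual_eq: "incl_bidual I G = bidual_map UNIV norm I (\<lambda>x. x) G"
  by (simp add: incl_bidual_def bidual_map_def dual_map_def cong: if_cong)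

lemma second_adjoint_bidual: "F \<in> bidual_A \<Longrightarrow> second_adjoint \<theta> F \<in> bidual_B"
  unfolding second_adjoint_eq
  by (rule bidual_map_bidual[OF A.normed_subspace_axioms B.normed_subspace_axioms bounded_linear_on_hom])

lemma incl_bidual_bidual: "G \<in> bidual_I \<Longrightarrow> incl_bidual I G \<in> bidual_B"
  unfolding incl_bidual_eq
  by (rule bidual_map_bidual[OF I.normed_subspace_axioms B.normed_subspace_axioms bounded_linear_on_inclusion])

lemma second_adjoint_zero [simp]: "second_adjoint \<theta> (\<lambda>f. 0) = (\<lambda>f. 0)"
  by (simp add: second_adjoint_def fun_eq_iff)

lemma incl_bidual_zero [simp]: "incl_bidual I (\<lambda>f. 0) = (\<lambda>f. 0)"
  by (simp add: incl_bidual_def fun_eq_iff)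

lemma dual_fst_dual: "\<Phi> \<in> dual_AI \<Longrightarrow> dual_fst \<Phi> \<in> dual_A"
  by (rule dual_map_dual[OF A.normed_subspace_axioms amalg.normed_subspace_axioms bounded_linear_on_inl])

lemma dual_snd_dual: "\<Phi> \<in> dual_AI \<Longrightarrow> dual_snd \<Phi> \<in> dual_I"
  by (rule dual_map_dual[OF I.normed_subspace_axioms amalg.normed_subspace_axioms bounded_linear_on_inr])

lemma dual_embed_A_dual: "f \<in> dual_A \<Longrightarrow> dual_embed_A f \<in> dual_AI"
  by (rule dual_map_dual[OF amalg.normed_subspace_axioms A.normed_subspace_axioms bounded_linear_on_fst])

lemma dual_embed_I_dual: "h \<in> dual_I \<Longrightarrow> dual_embed_I h \<in> dual_AI"
  by (rule dual_map_dual[OF amalg.normed_subspace_axioms I.normed_subspace_axioms bounded_linear_on_snd])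

lemma dual_fst_embed_A [simp]: "dual_fst (dual_embed_A f) = f"
  by (simp add: dual_map_def)

lemma dual_snd_embed_A [simp]: "f \<in> dual_A \<Longrightarrow> dual_snd (dual_embed_A f) = (\<lambda>x. 0)"
  by (auto simp: dual_map_def fun_eq_iff A.dual_zero_point)

lemma dual_fst_embed_I [simp]: "h \<in> dual_I \<Longrightarrow> dual_fst (dual_embed_I h) = (\<lambda>x. 0)"
  by (auto simp: dual_map_def fun_eq_iff I.dual_zero_point)

lemma dual_snd_embed_I [simp]: "h \<in> dual_I \<Longrightarrow> dual_snd (dual_embed_I h) = h"
  by (auto simp: dual_map_def fun_eq_iff I.dual_out)

lemma dual_AI_decompose:
  assumes "\<Phi> \<in> dual_AI"
  shows "(\<lambda>p. dual_embed_A (dual_fst \<Phi>) p + dual_embed_I (dual_snd \<Phi>) p) = \<Phi>"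
proof
  fix p :: "'a \<times> 'b"
  obtain a i where p: "p = (a, i)" by fastforce
  show "dual_embed_A (dual_fst \<Phi>) p + dual_embed_I (dual_snd \<Phi>) p = \<Phi> p"
    using amalg.dual_add[OF assms, of "(a, 0)" "(0, i)"] amalg.dual_out[OF assms, of p]
    by (simp add: p dual_map_def)
qed

lemma bidual_pair_bidual:
  assumes F: "F \<in> bidual_A" and G: "G \<in> bidual_I"
  shows "bidual_pair F G \<in> bidual_AI"
proof -
  have "bidual_pair F G = (\<lambda>\<Phi>. bidual_map carrier_AI amalg_norm UNIV (\<lambda>a. (a, 0)) F \<Phi>
                              + bidual_map carrier_AI amalg_norm I (\<lambda>i. (0, i)) G \<Phi>)"
    by (simp add: bidual_pair_def bidual_map_def fun_eq_iff)
  also have "\<dots> \<in> bidual_AI"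
    by (intro amalg.bidual_plus bidual_map_bidual[OF A.normed_subspace_axioms amalg.normed_subspace_axioms
          bounded_linear_on_inl F] bidual_map_bidual[OF I.normed_subspace_axioms amalg.normed_subspace_axioms
          bounded_linear_on_inr G])
  finally show ?thesis .
qed

lemma bidual_fst_bidual: "X \<in> bidual_AI \<Longrightarrow> bidual_fst X \<in> bidual_A"
  by (rule bidual_map_bidual[OF amalg.normed_subspace_axioms A.normed_subspace_axioms bounded_linear_on_fst])

lemma bidual_snd_bidual: "X \<in> bidual_AI \<Longrightarrow> bidual_snd X \<in> bidual_I"
  by (rule bidual_map_bidual[OF amalg.normed_subspace_axioms I.normed_subspace_axioms bounded_linear_on_snd])

lemma bidual_AI_decompose:
  assumes X: "X \<in> bidual_AI"
  shows "bidual_pair (bidual_fst X) (bidual_snd X) = X"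
proof
  fix \<Phi> show "bidual_pair (bidual_fst X) (bidual_snd X) \<Phi> = X \<Phi>"
  proof (cases "\<Phi> \<in> dual_AI")
    case True
    then have "bidual_pair (bidual_fst X) (bidual_snd X) \<Phi>
        = X (\<lambda>p. dual_embed_A (dual_fst \<Phi>) p + dual_embed_I (dual_snd \<Phi>) p)"
      by (simp add: bidual_pair_def bidual_map_def dual_fst_dual dual_snd_dual amalg.bidual_add[OF X]
          dual_embed_A_dual dual_embed_I_dual)
    then show ?thesis using dual_AI_decompose[OF True] by simp
  next
    case False
    then show ?thesis using amalg.bidual_out[OF X] by (simp add: bidual_pair_def)
  qed
qed

lemma dual_AI_extension:
  assumes "\<Phi> \<in> dual_AI"
  obtains g where "g \<in> dual_B" "\<forall>i\<in>I. g i = \<Phi> (0, i)"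
proof -
  obtain g where "g \<in> dual_B" "\<And>x. x \<in> I \<Longrightarrow> g x = dual_snd \<Phi> x"
    using dual_extension[OF ideal_subspace dual_snd_dual[OF assms]] by blast
  then show ?thesis using that by (simp add: dual_map_def)
qed

lemma second_adjoint_apply: "h \<in> dual_B \<Longrightarrow> second_adjoint \<theta> F h = F (dual_map UNIV \<theta> h)"
  by (simp add: second_adjoint_eq bidual_map_def)

lemma incl_bidual_apply: "h \<in> dual_B \<Longrightarrow> incl_bidual I G h = G (dual_map I (\<lambda>x. x) h)"
  by (simp add: incl_bidual_eq bidual_map_def)

lemma dual_map_hom_dual: "h \<in> dual_B \<Longrightarrow> dual_map UNIV \<theta> h \<in> dual_A"
  by (rule dual_map_dual[OF A.normed_subspace_axioms B.normed_subspace_axioms bounded_linear_on_hom])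

lemma dual_map_inclusion_dual: "h \<in> dual_B \<Longrightarrow> dual_map I (\<lambda>x. x) h \<in> dual_I"
  by (rule dual_map_dual[OF I.normed_subspace_axioms B.normed_subspace_axioms bounded_linear_on_inclusion])

text \<open>The mixed terms only see the values of \<open>\<Phi>\<close> on \<open>0 \<times> I\<close>; writing them through an extension
  g of these values to B turns them into module actions of \<open>\<theta>\<^sup>*\<^sup>* F\<close> and \<open>G \<in> I\<^sup>*\<^sup>* \<subseteq> B\<^sup>*\<^sup>*\<close> on g.\<close>

context
  fixes \<Phi> g
  assumes \<Phi>: "\<Phi> \<in> dual_AI" and g: "g \<in> dual_B" and extends: "\<forall>i\<in>I. g i = \<Phi> (0, i)"
begin

lemma dual_fst_Ff_bidual_pair:
  "dual_fst (Ff carrier_AI mult_AI (bidual_pair F G) \<Phi>)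
    = (\<lambda>a. Ff UNIV (*) F (dual_fst \<Phi>) a + dual_map UNIV \<theta> (Ff UNIV (*) (incl_bidual I G) g) a)"
proof
  fix a :: 'a
  let ?r = "rmod carrier_AI mult_AI \<Phi> (a, 0)"
  have r: "?r \<in> dual_AI" by (rule amalg.rmod_dual[OF \<Phi>]) simp
  have fst: "dual_fst ?r = rmod UNIV (*) (dual_fst \<Phi>) a"
    by (simp add: rmod_def dual_map_def)
  have snd: "dual_snd ?r = dual_map I (\<lambda>x. x) (rmod UNIV (*) g (\<theta> a))"
    by (auto simp: rmod_def dual_map_def fun_eq_iff extends ideal_left)
  have "dual_fst (Ff carrier_AI mult_AI (bidual_pair F G) \<Phi>) a = F (dual_fst ?r) + G (dual_snd ?r)"
    using r by (simp add: Ff_def dual_map_def bidual_pair_def)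
  also have "\<dots> = Ff UNIV (*) F (dual_fst \<Phi>) a + dual_map UNIV \<theta> (Ff UNIV (*) (incl_bidual I G) g) a"
    unfolding fst snd by (simp add: Ff_def dual_map_def incl_bidual_apply B.rmod_dual[OF g])
  finally show "dual_fst (Ff carrier_AI mult_AI (bidual_pair F G) \<Phi>) a = \<dots>" .
qed

lemma dual_snd_Ff_bidual_pair:
  "dual_snd (Ff carrier_AI mult_AI (bidual_pair F G) \<Phi>)
    = (\<lambda>i. dual_map I (\<lambda>x. x) (Ff UNIV (*) (second_adjoint \<theta> F) g) i + Ff I (*) G (dual_snd \<Phi>) i)"
  (is "?L = ?R")
proof
  fix i :: 'b
  show "?L i = ?R i"
  proof (cases "i \<in> I")
    case True
    let ?r = "rmod carrier_AI mult_AI \<Phi> (0, i)"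
    have r: "?r \<in> dual_AI" by (rule amalg.rmod_dual[OF \<Phi>]) (simp add: True)
    have fst: "dual_fst ?r = dual_map UNIV \<theta> (rmod UNIV (*) g i)"
      by (simp add: rmod_def dual_map_def extends ideal_right True)
    have snd: "dual_snd ?r = rmod I (*) (dual_snd \<Phi>) i"
      by (auto simp: rmod_def dual_map_def fun_eq_iff ideal_left)
    have "dual_snd (Ff carrier_AI mult_AI (bidual_pair F G) \<Phi>) i = F (dual_fst ?r) + G (dual_snd ?r)"
      using r True by (simp add: Ff_def dual_map_def bidual_pair_def)
    also have "\<dots> = dual_map I (\<lambda>x. x) (Ff UNIV (*) (second_adjoint \<theta> F) g) i + Ff I (*) G (dual_snd \<Phi>) i"
      using True unfolding fst snd by (simp add: Ff_def dual_map_def second_adjoint_apply B.rmod_dual[OF g])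
    finally show ?thesis .
  qed (simp add: dual_map_def Ff_def)
qed

lemma dual_fst_fF_bidual_pair:
  "dual_fst (fF carrier_AI mult_AI \<Phi> (bidual_pair F G))
    = (\<lambda>a. fF UNIV (*) (dual_fst \<Phi>) F a + dual_map UNIV \<theta> (fF UNIV (*) g (incl_bidual I G)) a)"
proof
  fix a :: 'a
  let ?l = "lmod carrier_AI mult_AI (a, 0) \<Phi>"
  have l: "?l \<in> dual_AI" by (rule amalg.lmod_dual[OF \<Phi>]) simp
  have fst: "dual_fst ?l = lmod UNIV (*) a (dual_fst \<Phi>)"
    by (simp add: lmod_def dual_map_def)
  have snd: "dual_snd ?l = dual_map I (\<lambda>x. x) (lmod UNIV (*) (\<theta> a) g)"
    by (auto simp: lmod_def dual_map_def fun_eq_iff extends ideal_right)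
  have "dual_fst (fF carrier_AI mult_AI \<Phi> (bidual_pair F G)) a = F (dual_fst ?l) + G (dual_snd ?l)"
    using l by (simp add: fF_def dual_map_def bidual_pair_def)
  also have "\<dots> = fF UNIV (*) (dual_fst \<Phi>) F a + dual_map UNIV \<theta> (fF UNIV (*) g (incl_bidual I G)) a"
    unfolding fst snd by (simp add: fF_def dual_map_def incl_bidual_apply B.lmod_dual[OF g])
  finally show "dual_fst (fF carrier_AI mult_AI \<Phi> (bidual_pair F G)) a = \<dots>" .
qed

lemma dual_snd_fF_bidual_pair:
  "dual_snd (fF carrier_AI mult_AI \<Phi> (bidual_pair F G))
    = (\<lambda>i. dual_map I (\<lambda>x. x) (fF UNIV (*) g (second_adjoint \<theta> F)) i + fF I (*) (dual_snd \<Phi>) G i)"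
  (is "?L = ?R")
proof
  fix i :: 'b
  show "?L i = ?R i"
  proof (cases "i \<in> I")
    case True
    let ?l = "lmod carrier_AI mult_AI (0, i) \<Phi>"
    have l: "?l \<in> dual_AI" by (rule amalg.lmod_dual[OF \<Phi>]) (simp add: True)
    have fst: "dual_fst ?l = dual_map UNIV \<theta> (lmod UNIV (*) i g)"
      by (simp add: lmod_def dual_map_def extends ideal_left True)
    have snd: "dual_snd ?l = lmod I (*) i (dual_snd \<Phi>)"
      by (auto simp: lmod_def dual_map_def fun_eq_iff ideal_right)
    have "dual_snd (fF carrier_AI mult_AI \<Phi> (bidual_pair F G)) i = F (dual_fst ?l) + G (dual_snd ?l)"
      using l True by (simp add: fF_def dual_map_def bidual_pair_def)
    also have "\<dots> = dual_map I (\<lambda>x. x) (fF UNIV (*) g (second_adjoint \<theta> F)) i + fF I (*) (dual_snd \<Phi>) G i"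
      using True unfolding fst snd by (simp add: fF_def dual_map_def second_adjoint_apply B.lmod_dual[OF g])
    finally show ?thesis .
  qed (simp add: dual_map_def fF_def)
qed

lemma arens_box_bidual_pair:
  assumes F: "F \<in> bidual_A" "F' \<in> bidual_A" and G: "G \<in> bidual_I" "G' \<in> bidual_I"
  shows "arens_box carrier_AI amalg_norm mult_AI (bidual_pair F G) (bidual_pair F' G') \<Phi>
    = arens_box UNIV norm (*) F F' (dual_fst \<Phi>)
      + arens_box UNIV norm (*) (second_adjoint \<theta> F) (incl_bidual I G') g
      + arens_box UNIV norm (*) (incl_bidual I G) (second_adjoint \<theta> F') g
      + arens_box I norm (*) G G' (dual_snd \<Phi>)"
proof -
  let ?\<Psi> = "Ff carrier_AI mult_AI (bidual_pair F' G') \<Phi>"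
  let ?x1 = "Ff UNIV (*) F' (dual_fst \<Phi>)"
  let ?x2 = "Ff UNIV (*) (incl_bidual I G') g"
  let ?y1 = "Ff UNIV (*) (second_adjoint \<theta> F') g"
  let ?y2 = "Ff I (*) G' (dual_snd \<Phi>)"
  have \<Psi>: "?\<Psi> \<in> dual_AI" by (rule amalg.Ff_dual[OF bidual_pair_bidual[OF F(2) G(2)] \<Phi>])
  have x1: "?x1 \<in> dual_A" by (rule A.Ff_dual[OF F(2) dual_fst_dual[OF \<Phi>]])
  have x2: "?x2 \<in> dual_B" by (rule B.Ff_dual[OF incl_bidual_bidual[OF G(2)] g])
  have y1: "?y1 \<in> dual_B" by (rule B.Ff_dual[OF second_adjoint_bidual[OF F(2)] g])
  have y2: "?y2 \<in> dual_I" by (rule I.Ff_dual[OF G(2) dual_snd_dual[OF \<Phi>]])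
  have "arens_box carrier_AI amalg_norm mult_AI (bidual_pair F G) (bidual_pair F' G') \<Phi>
      = F (dual_fst ?\<Psi>) + G (dual_snd ?\<Psi>)"
    using \<Phi> \<Psi> by (simp add: arens_box_def bidual_pair_def)
  also have "\<dots> = (F ?x1 + F (dual_map UNIV \<theta> ?x2)) + (G (dual_map I (\<lambda>x. x) ?y1) + G ?y2)"
    unfolding dual_fst_Ff_bidual_pair dual_snd_Ff_bidual_pair
    using A.bidual_add[OF F(1) x1 dual_map_hom_dual[OF x2]]
      I.bidual_add[OF G(1) dual_map_inclusion_dual[OF y1] y2] by simp
  also have "\<dots> = arens_box UNIV norm (*) F F' (dual_fst \<Phi>)
      + arens_box UNIV norm (*) (second_adjoint \<theta> F) (incl_bidual I G') g
      + arens_box UNIV norm (*) (incl_bidual I G) (second_adjoint \<theta> F') g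
      + arens_box I norm (*) G G' (dual_snd \<Phi>)"
    using g x2 y1 dual_fst_dual[OF \<Phi>] dual_snd_dual[OF \<Phi>]
    by (simp add: arens_box_def second_adjoint_apply incl_bidual_apply)
  finally show ?thesis .
qed

lemma arens_diamond_bidual_pair:
  assumes F: "F \<in> bidual_A" "F' \<in> bidual_A" and G: "G \<in> bidual_I" "G' \<in> bidual_I"
  shows "arens_diamond carrier_AI amalg_norm mult_AI (bidual_pair F G) (bidual_pair F' G') \<Phi>
    = arens_diamond UNIV norm (*) F F' (dual_fst \<Phi>)
      + arens_diamond UNIV norm (*) (second_adjoint \<theta> F) (incl_bidual I G') g
      + arens_diamond UNIV norm (*) (incl_bidual I G) (second_adjoint \<theta> F') g
      + arens_diamond I norm (*) G G' (dual_snd \<Phi>)"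
proof -
  let ?\<Omega> = "fF carrier_AI mult_AI \<Phi> (bidual_pair F G)"
  let ?x1 = "fF UNIV (*) (dual_fst \<Phi>) F"
  let ?x2 = "fF UNIV (*) g (incl_bidual I G)"
  let ?y1 = "fF UNIV (*) g (second_adjoint \<theta> F)"
  let ?y2 = "fF I (*) (dual_snd \<Phi>) G"
  have \<Omega>: "?\<Omega> \<in> dual_AI" by (rule amalg.fF_dual[OF bidual_pair_bidual[OF F(1) G(1)] \<Phi>])
  have x1: "?x1 \<in> dual_A" by (rule A.fF_dual[OF F(1) dual_fst_dual[OF \<Phi>]])
  have x2: "?x2 \<in> dual_B" by (rule B.fF_dual[OF incl_bidual_bidual[OF G(1)] g])
  have y1: "?y1 \<in> dual_B" by (rule B.fF_dual[OF second_adjoint_bidual[OF F(1)] g])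
  have y2: "?y2 \<in> dual_I" by (rule I.fF_dual[OF G(1) dual_snd_dual[OF \<Phi>]])
  have "arens_diamond carrier_AI amalg_norm mult_AI (bidual_pair F G) (bidual_pair F' G') \<Phi>
      = F' (dual_fst ?\<Omega>) + G' (dual_snd ?\<Omega>)"
    using \<Phi> \<Omega> by (simp add: arens_diamond_def bidual_pair_def)
  also have "\<dots> = (F' ?x1 + F' (dual_map UNIV \<theta> ?x2)) + (G' (dual_map I (\<lambda>x. x) ?y1) + G' ?y2)"
    unfolding dual_fst_fF_bidual_pair dual_snd_fF_bidual_pair
    using A.bidual_add[OF F(2) x1 dual_map_hom_dual[OF x2]]
      I.bidual_add[OF G(2) dual_map_inclusion_dual[OF y1] y2] by simp
  also have "\<dots> = arens_diamond UNIV norm (*) F F' (dual_fst \<Phi>)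
      + arens_diamond UNIV norm (*) (second_adjoint \<theta> F) (incl_bidual I G') g
      + arens_diamond UNIV norm (*) (incl_bidual I G) (second_adjoint \<theta> F') g
      + arens_diamond I norm (*) G G' (dual_snd \<Phi>)"
    using g x2 y1 dual_fst_dual[OF \<Phi>] dual_snd_dual[OF \<Phi>]
    by (simp add: arens_diamond_def second_adjoint_apply incl_bidual_apply)
  finally show ?thesis .
qed

end

lemma arens_regular_A_of_amalg:
  assumes regular: "arens_regular carrier_AI amalg_norm mult_AI"
  shows "arens_regular (UNIV :: 'a set) norm (*)"
proof (rule arens_regularI)
  fix F F' f assume F: "F \<in> bidual_A" "F' \<in> bidual_A" and f: "f \<in> dual_A"
  let ?\<Phi> = "dual_embed_A f" and ?X = "bidual_pair F (\<lambda>h. 0)" and ?Y = "bidual_pair F' (\<lambda>h. 0)"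
  have \<Phi>: "?\<Phi> \<in> dual_AI" by (rule dual_embed_A_dual[OF f])
  obtain g where g: "g \<in> dual_B" "\<forall>i\<in>I. g i = ?\<Phi> (0, i)" using dual_AI_extension[OF \<Phi>] by blast
  note zeros = B.arens_box_zero_left B.arens_box_zero_right B.arens_diamond_zero_left
    B.arens_diamond_zero_right I.arens_box_zero_left I.arens_diamond_zero_right second_adjoint_bidual
  have "arens_box UNIV norm (*) F F' f = arens_box carrier_AI amalg_norm mult_AI ?X ?Y ?\<Phi>"
    using arens_box_bidual_pair[OF \<Phi> g F I.bidual_zero I.bidual_zero] f F by (simp add: zeros)
  also have "\<dots> = arens_diamond carrier_AI amalg_norm mult_AI ?X ?Y ?\<Phi>"
    using regular bidual_pair_bidual F I.bidual_zero by (blast intro: arens_regularD)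
  also have "\<dots> = arens_diamond UNIV norm (*) F F' f"
    using arens_diamond_bidual_pair[OF \<Phi> g F I.bidual_zero I.bidual_zero] f F by (simp add: zeros)
  finally show "arens_box UNIV norm (*) F F' f = arens_diamond UNIV norm (*) F F' f" .
qed

lemma arens_regular_I_of_amalg:
  assumes regular: "arens_regular carrier_AI amalg_norm mult_AI"
  shows "arens_regular I norm (*)"
proof (rule arens_regularI)
  fix G G' h assume G: "G \<in> bidual_I" "G' \<in> bidual_I" and h: "h \<in> dual_I"
  let ?\<Phi> = "dual_embed_I h" and ?X = "bidual_pair (\<lambda>f. 0) G" and ?Y = "bidual_pair (\<lambda>f. 0) G'"
  have \<Phi>: "?\<Phi> \<in> dual_AI" by (rule dual_embed_I_dual[OF h])
  obtain g where g: "g \<in> dual_B" "\<forall>i\<in>I. g i = ?\<Phi> (0, i)" using dual_AI_extension[OF \<Phi>] by blast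
  note zeros = B.arens_box_zero_left B.arens_box_zero_right B.arens_diamond_zero_left
    B.arens_diamond_zero_right A.arens_box_zero_left A.arens_diamond_zero_right incl_bidual_bidual
  have "arens_box I norm (*) G G' h = arens_box carrier_AI amalg_norm mult_AI ?X ?Y ?\<Phi>"
    using arens_box_bidual_pair[OF \<Phi> g A.bidual_zero A.bidual_zero G] h G by (simp add: zeros)
  also have "\<dots> = arens_diamond carrier_AI amalg_norm mult_AI ?X ?Y ?\<Phi>"
    using regular bidual_pair_bidual G A.bidual_zero by (blast intro: arens_regularD)
  also have "\<dots> = arens_diamond I norm (*) G G' h"
    using arens_diamond_bidual_pair[OF \<Phi> g A.bidual_zero A.bidual_zero G] h G by (simp add: zeros)
  finally show "arens_box I norm (*) G G' h = arens_diamond I norm (*) G G' h" .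
qed

lemma mixed_products_agree_of_amalg:
  assumes regular: "arens_regular carrier_AI amalg_norm mult_AI"
    and F: "F \<in> bidual_A" and G: "G \<in> bidual_I" and g: "g \<in> dual_B"
  shows "arens_box UNIV norm (*) (second_adjoint \<theta> F) (incl_bidual I G) g
          = arens_diamond UNIV norm (*) (second_adjoint \<theta> F) (incl_bidual I G) g"
    and "arens_box UNIV norm (*) (incl_bidual I G) (second_adjoint \<theta> F) g
          = arens_diamond UNIV norm (*) (incl_bidual I G) (second_adjoint \<theta> F) g"
proof -
  let ?X = "bidual_pair F (\<lambda>h. 0)" and ?Y = "bidual_pair (\<lambda>f. 0) G"
  \<comment> \<open>test against the functional that vanishes on A and agrees with g on I\<close>
  let ?\<Phi> = "dual_embed_I (dual_map I (\<lambda>x. x) g)"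
  have XY: "?X \<in> bidual_AI" "?Y \<in> bidual_AI"
    using bidual_pair_bidual F G A.bidual_zero I.bidual_zero by blast+
  have h: "dual_map I (\<lambda>x. x) g \<in> dual_I" by (rule dual_map_inclusion_dual[OF g])
  have \<Phi>: "?\<Phi> \<in> dual_AI" by (rule dual_embed_I_dual[OF h])
  have extends: "\<forall>i\<in>I. g i = ?\<Phi> (0, i)" by (simp add: dual_map_def)
  note box = arens_box_bidual_pair[OF \<Phi> g extends] and diamond = arens_diamond_bidual_pair[OF \<Phi> g extends]
  note zeros = A.arens_box_zero_left A.arens_box_zero_right A.arens_diamond_zero_left
    A.arens_diamond_zero_right B.arens_box_zero_left B.arens_diamond_zero_right
    I.arens_box_zero_left I.arens_box_zero_right I.arens_diamond_zero_left I.arens_diamond_zero_right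
  have "arens_box UNIV norm (*) (second_adjoint \<theta> F) (incl_bidual I G) g
      = arens_box carrier_AI amalg_norm mult_AI ?X ?Y ?\<Phi>"
    using box[OF F A.bidual_zero I.bidual_zero G] F G h by (simp add: zeros)
  also have "\<dots> = arens_diamond carrier_AI amalg_norm mult_AI ?X ?Y ?\<Phi>"
    by (rule arens_regularD[OF regular XY])
  also have "\<dots> = arens_diamond UNIV norm (*) (second_adjoint \<theta> F) (incl_bidual I G) g"
    using diamond[OF F A.bidual_zero I.bidual_zero G] F G h by (simp add: zeros)
  finally show "arens_box UNIV norm (*) (second_adjoint \<theta> F) (incl_bidual I G) g
      = arens_diamond UNIV norm (*) (second_adjoint \<theta> F) (incl_bidual I G) g" .
  have "arens_box UNIV norm (*) (incl_bidual I G) (second_adjoint \<theta> F) g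
      = arens_box carrier_AI amalg_norm mult_AI ?Y ?X ?\<Phi>"
    using box[OF A.bidual_zero F G I.bidual_zero] F G h by (simp add: zeros)
  also have "\<dots> = arens_diamond carrier_AI amalg_norm mult_AI ?Y ?X ?\<Phi>"
    by (rule arens_regularD[OF regular XY(2,1)])
  also have "\<dots> = arens_diamond UNIV norm (*) (incl_bidual I G) (second_adjoint \<theta> F) g"
    using diamond[OF A.bidual_zero F G I.bidual_zero] F G h by (simp add: zeros)
  finally show "arens_box UNIV norm (*) (incl_bidual I G) (second_adjoint \<theta> F) g
      = arens_diamond UNIV norm (*) (incl_bidual I G) (second_adjoint \<theta> F) g" .
qed

lemma mixed_products_regular_of_amalg:
  assumes "arens_regular carrier_AI amalg_norm mult_AI" and "F \<in> bidual_A" and "G \<in> bidual_I"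
  shows "arens_box UNIV norm (*) (second_adjoint \<theta> F) (incl_bidual I G)
           = arens_diamond UNIV norm (*) (second_adjoint \<theta> F) (incl_bidual I G)"
    and "arens_box UNIV norm (*) (incl_bidual I G) (second_adjoint \<theta> F)
           = arens_diamond UNIV norm (*) (incl_bidual I G) (second_adjoint \<theta> F)"
  using mixed_products_agree_of_amalg[OF assms] by (blast intro: arens_products_eqI)+

lemma arens_regular_amalg_of_components:
  assumes A: "arens_regular (UNIV :: 'a set) norm (*)" and I: "arens_regular I norm (*)"
    and mixed: "\<And>F G. F \<in> bidual_A \<Longrightarrow> G \<in> bidual_I \<Longrightarrow>
      arens_box UNIV norm (*) (second_adjoint \<theta> F) (incl_bidual I G)
        = arens_diamond UNIV norm (*) (second_adjoint \<theta> F) (incl_bidual I G)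
      \<and> arens_box UNIV norm (*) (incl_bidual I G) (second_adjoint \<theta> F)
        = arens_diamond UNIV norm (*) (incl_bidual I G) (second_adjoint \<theta> F)"
  shows "arens_regular carrier_AI amalg_norm mult_AI"
proof (rule arens_regularI)
  fix X Y \<Phi> assume X: "X \<in> bidual_AI" and Y: "Y \<in> bidual_AI" and \<Phi>: "\<Phi> \<in> dual_AI"
  obtain g where g: "g \<in> dual_B" "\<forall>i\<in>I. g i = \<Phi> (0, i)" using dual_AI_extension[OF \<Phi>] by blast
  have comps: "bidual_fst X \<in> bidual_A" "bidual_fst Y \<in> bidual_A" "bidual_snd X \<in> bidual_I" "bidual_snd Y \<in> bidual_I"
    using X Y by (simp_all add: bidual_fst_bidual bidual_snd_bidual)
  have "arens_box carrier_AI amalg_norm mult_AI (bidual_pair (bidual_fst X) (bidual_snd X))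
          (bidual_pair (bidual_fst Y) (bidual_snd Y)) \<Phi>
      = arens_diamond carrier_AI amalg_norm mult_AI (bidual_pair (bidual_fst X) (bidual_snd X))
          (bidual_pair (bidual_fst Y) (bidual_snd Y)) \<Phi>"
    unfolding arens_box_bidual_pair[OF \<Phi> g comps] arens_diamond_bidual_pair[OF \<Phi> g comps]
    using arens_regularD[OF A comps(1,2)] arens_regularD[OF I comps(3,4)]
      mixed[OF comps(1) comps(4)] mixed[OF comps(2) comps(3)] by simp
  then show "arens_box carrier_AI amalg_norm mult_AI X Y \<Phi> = arens_diamond carrier_AI amalg_norm mult_AI X Y \<Phi>"
    unfolding bidual_AI_decompose[OF X] bidual_AI_decompose[OF Y] .
qed

end

theorem corollary4p2:
  fixes \<theta> :: "'a::{real_normed_algebra,banach} \<Rightarrow> 'b::{real_normed_algebra,banach}"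
    and I :: "'b set"
  assumes hom_lin: "bounded_linear \<theta>"
    and hom_mult: "\<And>x y. \<theta> (x * y) = \<theta> x * \<theta> y"
    and hom_norm: "onorm \<theta> \<le> 1"
    and I_subspace: "subspace I"
    and I_closed: "closed I"
    and I_left: "\<And>b i. i \<in> I \<Longrightarrow> b * i \<in> I"
    and I_right: "\<And>b i. i \<in> I \<Longrightarrow> i * b \<in> I"
  shows "arens_regular (amalg_carrier I :: ('a \<times> 'b) set) amalg_norm (amalg_mult \<theta>) \<longleftrightarrow>
           arens_regular (UNIV :: 'a set) norm (*)
         \<and> arens_regular I norm (*)
         \<and> (\<forall>F \<in> second_adjoint \<theta> ` bidual (UNIV :: 'a set) norm.
              \<forall>G \<in> incl_bidual I ` bidual I norm.
                arens_box (UNIV :: 'b set) norm (*) F G = arens_diamond (UNIV :: 'b set) norm (*) F G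
              \<and> arens_box (UNIV :: 'b set) norm (*) G F = arens_diamond (UNIV :: 'b set) norm (*) G F)"
proof -
  interpret amalgamation \<theta> I
    by (rule amalgamation.intro[OF hom_lin hom_norm I_subspace I_left I_right])
  show ?thesis
    using arens_regular_A_of_amalg arens_regular_I_of_amalg mixed_products_regular_of_amalg
      arens_regular_amalg_of_components by blast
qed

end
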